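(* Let $T$ be a tree that is not isomorphic to the path $P_2$. Then the following statements are equivalent: (i) $\gamma_M(T)=\ell(T)$; (ii) $\gamma(T)=|\mathcal S(T)|$; (iii) for every vertex $u\in V(T)$ there is a leaf of $T$ at distance at most $2$ from $u$.
   Context: All graphs are finite, simple, undirected and connected; $d(u,v)$ is the shortest-path distance. A set $S\subseteq V(G)$ is a resolving set if for all distinct $x,y\in V(G)$ there is $u\in S$ with $d(u,x)\neq d(u,y)$. A set $S$ is dominating if every vertex not in $S$ has a neighbor in $S$; $\gamma(G)$ is the minimum size of a dominating set. A metric-locating-dominating set (MLD-set) is a set that is both resolving and dominating; $\gamma_M(G)$ is the minimum size of an MLD-set. In a tree $T$, a leaf is a vertex of degree 1, $\ell(T)$ is the number of leaves, a support vertex is a vertex adjacent to some leaf, and $\mathcal S(T)$ is the set of support vertices. *)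

theory Defs
  imports Main
begin

definition simple_graph :: "'a set \<Rightarrow> ('a \<Rightarrow> 'a \<Rightarrow> bool) \<Rightarrow> bool" where
  "simple_graph V E \<longleftrightarrow> finite V \<and> V \<noteq> {} \<and>
     (\<forall>u v. E u v \<longrightarrow> u \<in> V \<and> v \<in> V \<and> u \<noteq> v \<and> E v u)"

definition walk :: "'a set \<Rightarrow> ('a \<Rightarrow> 'a \<Rightarrow> bool) \<Rightarrow> 'a list \<Rightarrow> bool" where
  "walk V E xs \<longleftrightarrow> xs \<noteq> [] \<and> set xs \<subseteq> V \<and>
     (\<forall>i. Suc i < length xs \<longrightarrow> E (xs ! i) (xs ! Suc i))"

definition connected_graph :: "'a set \<Rightarrow> ('a \<Rightarrow> 'a \<Rightarrow> bool) \<Rightarrow> bool" where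
  "connected_graph V E \<longleftrightarrow>
     (\<forall>u\<in>V. \<forall>v\<in>V. \<exists>xs. walk V E xs \<and> hd xs = u \<and> last xs = v)"

definition is_cycle :: "'a set \<Rightarrow> ('a \<Rightarrow> 'a \<Rightarrow> bool) \<Rightarrow> 'a list \<Rightarrow> bool" where
  "is_cycle V E xs \<longleftrightarrow> walk V E xs \<and> distinct xs \<and> length xs \<ge> 3 \<and> E (last xs) (hd xs)"

definition is_tree :: "'a set \<Rightarrow> ('a \<Rightarrow> 'a \<Rightarrow> bool) \<Rightarrow> bool" where
  "is_tree V E \<longleftrightarrow> simple_graph V E \<and> connected_graph V E \<and> (\<nexists>xs. is_cycle V E xs)"

definition gdist :: "'a set \<Rightarrow> ('a \<Rightarrow> 'a \<Rightarrow> bool) \<Rightarrow> 'a \<Rightarrow> 'a \<Rightarrow> nat" where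
  "gdist V E u v = (LEAST n. \<exists>xs. walk V E xs \<and> hd xs = u \<and> last xs = v \<and> length xs = Suc n)"

definition resolving_set :: "'a set \<Rightarrow> ('a \<Rightarrow> 'a \<Rightarrow> bool) \<Rightarrow> 'a set \<Rightarrow> bool" where
  "resolving_set V E S \<longleftrightarrow> S \<subseteq> V \<and>
     (\<forall>x\<in>V. \<forall>y\<in>V. x \<noteq> y \<longrightarrow> (\<exists>u\<in>S. gdist V E u x \<noteq> gdist V E u y))"

definition dominating_set :: "'a set \<Rightarrow> ('a \<Rightarrow> 'a \<Rightarrow> bool) \<Rightarrow> 'a set \<Rightarrow> bool" where
  "dominating_set V E S \<longleftrightarrow> S \<subseteq> V \<and> (\<forall>v\<in>V - S. \<exists>u\<in>S. E v u)"

definition mld_set :: "'a set \<Rightarrow> ('a \<Rightarrow> 'a \<Rightarrow> bool) \<Rightarrow> 'a set \<Rightarrow> bool" where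
  "mld_set V E S \<longleftrightarrow> resolving_set V E S \<and> dominating_set V E S"

definition domination_number :: "'a set \<Rightarrow> ('a \<Rightarrow> 'a \<Rightarrow> bool) \<Rightarrow> nat" where
  "domination_number V E = Min (card ` {S. dominating_set V E S})"

definition mld_number :: "'a set \<Rightarrow> ('a \<Rightarrow> 'a \<Rightarrow> bool) \<Rightarrow> nat" where
  "mld_number V E = Min (card ` {S. mld_set V E S})"

definition degree :: "'a set \<Rightarrow> ('a \<Rightarrow> 'a \<Rightarrow> bool) \<Rightarrow> 'a \<Rightarrow> nat" where
  "degree V E v = card {u\<in>V. E v u}"

definition leaves :: "'a set \<Rightarrow> ('a \<Rightarrow> 'a \<Rightarrow> bool) \<Rightarrow> 'a set" where
  "leaves V E = {v\<in>V. degree V E v = 1}"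

definition support_vertices :: "'a set \<Rightarrow> ('a \<Rightarrow> 'a \<Rightarrow> bool) \<Rightarrow> 'a set" where
  "support_vertices V E = {v\<in>V. \<exists>l\<in>leaves V E. E v l}"

definition iso_P2 :: "'a set \<Rightarrow> ('a \<Rightarrow> 'a \<Rightarrow> bool) \<Rightarrow> bool" where
  "iso_P2 V E \<longleftrightarrow> (\<exists>a b. a \<noteq> b \<and> V = {a, b} \<and> E a b)"

end

theory Submission
  imports Defs
begin

text \<open>Every dominating set contains, for each support vertex s, either s or a leaf at s; every
  MLD-set contains, for each leaf, either the leaf or its support vertex, and two leaves at the
  same support vertex that both lie outside it are not resolved by it. As T is not P2, no support
  vertex is a leaf, so these choices are injections S(T) \<rightarrow> D and L(T) \<rightarrow> W into S(T) \<union> L(T),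
  where L(T) is the set of leaves. Hence \<gamma>(T) \<ge> |S(T)| and \<gamma>_M(T) \<ge> |L(T)|, and in case of
  equality some minimum set lies inside S(T) \<union> L(T); but such a set only dominates vertices within distance 2 of a leaf. Conversely, if
  every vertex is within distance 2 of a leaf, then S(T) dominates, and S(T) together with all
  leaves except one at each support vertex is an MLD-set of size at most |L(T)|: two neighbours of
  a common support vertex, one of them not a leaf, are resolved by a support vertex behind the
  non-leaf, because in a tree every vertex has only one neighbour closer to a given vertex.\<close>

lemma injection_card_le_and_subset:
  assumes "finite B" "inj_on g A" "g ` A \<subseteq> B" "g ` A \<subseteq> C"
  shows "card A \<le> card B" and "card B \<le> card A \<Longrightarrow> B \<subseteq> C"
proof -
  show "card A \<le> card B"
    using card_inj_on_le assms(1-3) by blast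
  assume "card B \<le> card A"
  then have "g ` A = B"
    using card_subset_eq[OF assms(1,3)] card_image[OF assms(2)] card_mono[OF assms(1,3)] by simp
  then show "B \<subseteq> C"
    using assms(4) by blast
qed

lemma inj_on_if_replace:
  assumes "inj_on r (A - D)" "\<And>x. x \<in> A - D \<Longrightarrow> r x \<notin> A"
  shows "inj_on (\<lambda>x. if x \<in> D then x else r x) A"
  using assms unfolding inj_on_def by (metis Diff_iff)

lemma obtain_maximizer:
  fixes f :: "'a \<Rightarrow> 'b::linorder"
  assumes "finite C" "x \<in> C"
  obtains w where "w \<in> C" "\<And>z. z \<in> C \<Longrightarrow> f z \<le> f w"
proof -
  have "Max (f ` C) \<in> f ` C"
    using assms by (intro Max_in) auto
  then obtain w where "w \<in> C" "f w = Max (f ` C)"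
    by auto
  then show thesis
    using that assms(1) by simp
qed

lemma Min_card_attained:
  assumes "finite A" "P A" "\<And>D. P D \<Longrightarrow> D \<subseteq> A"
  shows "\<exists>D. P D \<and> card D = Min (card ` {D. P D})"
    and "P D \<Longrightarrow> Min (card ` {D. P D}) \<le> card D"
proof -
  have "finite {D. P D}"
    using assms(1,3) by (metis Collect_mono Pow_def finite_Pow_iff finite_subset)
  then have "finite (card ` {D. P D})" "card ` {D. P D} \<noteq> {}"
    using assms(2) by auto
  then show "\<exists>D. P D \<and> card D = Min (card ` {D. P D})" "P D \<Longrightarrow> Min (card ` {D. P D}) \<le> card D"
    using Min_in by fastforce+
qed

locale sgraph =
  fixes V :: "'a set" and E :: "'a \<Rightarrow> 'a \<Rightarrow> bool"
  assumes simple: "simple_graph V E"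
begin

lemma finite_V: "finite V"
  using simple unfolding simple_graph_def by blast

lemma edge_in_V: "E u v \<Longrightarrow> u \<in> V \<and> v \<in> V"
  using simple unfolding simple_graph_def by blast

lemma edge_sym: "E u v \<Longrightarrow> E v u"
  using simple unfolding simple_graph_def by blast

lemma edge_irrefl: "E u v \<Longrightarrow> u \<noteq> v"
  using simple unfolding simple_graph_def by blast

lemma walk_Cons: "xs \<noteq> [] \<Longrightarrow> walk V E (v # xs) \<longleftrightarrow> v \<in> V \<and> E v (hd xs) \<and> walk V E xs"
  unfolding walk_def by (auto simp: hd_conv_nth nth_Cons split: nat.splits)

lemma walk_append:
  assumes "walk V E xs" "walk V E ys" "E (last xs) (hd ys)"
  shows "walk V E (xs @ ys)"
  using assms
proof (induction xs)
  case (Cons x xs)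
  then show ?case
    by (cases "xs = []") (auto simp: walk_Cons walk_def[of _ _ "[x]"] walk_def[of _ _ ys])
qed (simp add: walk_def)

lemma walk_rev: "walk V E xs \<Longrightarrow> walk V E (rev xs)"
proof (induction xs)
  case (Cons x xs)
  show ?case
  proof (cases "xs = []")
    case True
    then show ?thesis using Cons.prems by simp
  next
    case False
    then have "walk V E [x]" "E (hd xs) x" using Cons.prems
      by (auto simp: walk_Cons walk_def[of _ _ "[x]"] edge_sym)
    then show ?thesis using Cons False by (auto simp: walk_Cons last_rev intro: walk_append)
  qed
qed (simp add: walk_def)

lemma walk_map_upt:
  assumes "\<And>i. i \<le> n \<Longrightarrow> f i \<in> V" and "\<And>i. i < n \<Longrightarrow> E (f i) (f (Suc i))"
  shows "walk V E (map f [0..<Suc n])"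
  using assms unfolding walk_def by (auto simp del: upt_Suc)

lemma walk_butlast: "walk V E xs \<Longrightarrow> 2 \<le> length xs \<Longrightarrow> walk V E (butlast xs)"
  unfolding walk_def
  by (cases xs rule: rev_cases) (auto simp: nth_append, metis Suc_lessD)

abbreviation d where "d \<equiv> gdist V E"

lemma gdist_le_walk: "walk V E xs \<Longrightarrow> hd xs = u \<Longrightarrow> last xs = v \<Longrightarrow> d u v \<le> length xs - 1"
  unfolding gdist_def by (rule Least_le) (auto simp: walk_def)

lemma gdist_refl: "u \<in> V \<Longrightarrow> d u u = 0"
  using gdist_le_walk[of "[u]" u u] by (simp add: walk_def)

lemma leaves_subset_V: "leaves V E \<subseteq> V"
  unfolding leaves_def by blast

lemma support_vertices_subset_V: "support_vertices V E \<subseteq> V"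
  unfolding support_vertices_def by blast

lemma leaf_neighbours: "l \<in> leaves V E \<Longrightarrow> \<exists>s. {u. E l u} = {s}"
  unfolding leaves_def degree_def using edge_in_V
  by (smt (verit, best) Collect_cong card_1_singletonE mem_Collect_eq)

lemma leaf_neighbour_unique: "l \<in> leaves V E \<Longrightarrow> E l u \<Longrightarrow> E l v \<Longrightarrow> u = v"
  using leaf_neighbours by (metis mem_Collect_eq singletonD)

lemma leafI: "l \<in> V \<Longrightarrow> E l s \<Longrightarrow> (\<And>u. E l u \<Longrightarrow> u = s) \<Longrightarrow> l \<in> leaves V E"
proof -
  assume "l \<in> V" "E l s" "\<And>u. E l u \<Longrightarrow> u = s"
  then have "{u\<in>V. E l u} = {s}" using edge_in_V by blast
  then show ?thesis unfolding leaves_def degree_def using \<open>l \<in> V\<close> by simp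
qed

definition support_of :: "'a \<Rightarrow> 'a" where
  "support_of l = (SOME s. E l s)"

definition chosen_leaf :: "'a \<Rightarrow> 'a" where
  "chosen_leaf s = (SOME l. l \<in> leaves V E \<and> E s l)"

lemma support_of:
  assumes l: "l \<in> leaves V E"
  shows "E l (support_of l)" and "support_of l \<in> support_vertices V E"
proof -
  show e: "E l (support_of l)"
    unfolding support_of_def using leaf_neighbours[OF l] by (metis insertI1 mem_Collect_eq someI)
  show "support_of l \<in> support_vertices V E"
    unfolding support_vertices_def using e edge_sym edge_in_V l by blast
qed

lemma leaf_edge_support_of: "l \<in> leaves V E \<Longrightarrow> E l s \<Longrightarrow> s = support_of l"
  using leaf_neighbour_unique support_of(1) by blast

lemma chosen_leaf:
  "s \<in> support_vertices V E \<Longrightarrow> chosen_leaf s \<in> leaves V E \<and> E s (chosen_leaf s)"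
  unfolding chosen_leaf_def support_vertices_def by (rule someI_ex) blast

lemma support_of_chosen_leaf: "s \<in> support_vertices V E \<Longrightarrow> support_of (chosen_leaf s) = s"
  using chosen_leaf leaf_edge_support_of edge_sym by metis

lemma inj_on_chosen_leaf: "inj_on chosen_leaf (support_vertices V E)"
  using support_of_chosen_leaf by (metis inj_on_inverseI)

lemma dominating_set_subset: "dominating_set V E D \<Longrightarrow> D \<subseteq> V"
  unfolding dominating_set_def by blast

lemma dominating_set_leaf: "dominating_set V E D \<Longrightarrow> l \<in> leaves V E \<Longrightarrow> l \<in> D \<or> support_of l \<in> D"
  unfolding dominating_set_def using leaves_subset_V leaf_edge_support_of by blast

definition mld_candidate :: "'a set" where
  "mld_candidate = support_vertices V E \<union> (leaves V E - chosen_leaf ` support_vertices V E)"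

lemma leaf_outside_mld_candidate:
  "l \<in> leaves V E \<Longrightarrow> l \<notin> mld_candidate \<Longrightarrow> l = chosen_leaf (support_of l)"
  unfolding mld_candidate_def using support_of_chosen_leaf by fastforce

lemma card_mld_candidate: "card mld_candidate \<le> card (leaves V E)"
proof -
  let ?S = "support_vertices V E" and ?L = "leaves V E"
  have fin: "finite ?S" "finite ?L"
    using finite_V support_vertices_subset_V leaves_subset_V finite_subset by blast+
  have card_S: "card (chosen_leaf ` ?S) = card ?S"
    using inj_on_chosen_leaf by (rule card_image)
  have sub: "chosen_leaf ` ?S \<subseteq> ?L"
    using chosen_leaf by blast
  have "card mld_candidate \<le> card ?S + card (?L - chosen_leaf ` ?S)"
    unfolding mld_candidate_def by (rule card_Un_le)
  also have "\<dots> = card ?L"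
    using card_Diff_subset[OF finite_subset[OF sub fin(2)] sub] card_mono[OF fin(2) sub] card_S
    by simp
  finally show ?thesis .
qed

end

locale connected_sgraph = sgraph +
  assumes connected: "connected_graph V E"
begin

lemma shortest_walk:
  assumes "u \<in> V" "v \<in> V"
  obtains xs where "walk V E xs" "hd xs = u" "last xs = v" "length xs = Suc (d u v)"
proof -
  obtain xs where "walk V E xs" "hd xs = u" "last xs = v"
    using connected assms unfolding connected_graph_def by blast
  then have "\<exists>n xs. walk V E xs \<and> hd xs = u \<and> last xs = v \<and> length xs = Suc n"
    by (metis Suc_pred length_greater_0_conv walk_def)
  from LeastI_ex[OF this] show thesis
    using that unfolding gdist_def by blast
qed

lemma gdist_eq_0_iff:
  assumes "u \<in> V" "v \<in> V"
  shows "d u v = 0 \<longleftrightarrow> u = v"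
proof
  assume "d u v = 0"
  then obtain xs where "hd xs = u" "last xs = v" "length xs = 1"
    using shortest_walk[OF assms] by auto
  then show "u = v"
    by (cases xs) auto
qed (simp add: gdist_refl assms)

lemma gdist_sym: "u \<in> V \<Longrightarrow> v \<in> V \<Longrightarrow> d u v = d v u"
proof -
  have "d u v \<le> d v u" if u: "u \<in> V" and v: "v \<in> V" for u v
  proof -
    obtain xs where "walk V E xs" "hd xs = v" "last xs = u" "length xs = Suc (d v u)"
      using shortest_walk[OF v u] .
    then show ?thesis
      using gdist_le_walk[of "rev xs" u v] walk_rev by (simp add: hd_rev last_rev)
  qed
  then show "u \<in> V \<Longrightarrow> v \<in> V \<Longrightarrow> d u v = d v u"
    by (simp add: le_antisym)
qed

lemma gdist_edge_le: "u \<in> V \<Longrightarrow> E v w \<Longrightarrow> d u w \<le> d u v + 1"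
proof -
  assume u: "u \<in> V" and e: "E v w"
  obtain xs where "walk V E xs" "hd xs = u" "last xs = v" "length xs = Suc (d u v)"
    using shortest_walk u edge_in_V[OF e] by blast
  moreover have "walk V E [w]" using edge_in_V[OF e] by (simp add: walk_def)
  ultimately show ?thesis
    using gdist_le_walk[of "xs @ [w]" u w] walk_append[of xs "[w]"] e by (auto simp: walk_def)
qed

lemma gdist_predecessor:
  assumes u: "u \<in> V" and v: "v \<in> V" and uv: "d u v = Suc k"
  obtains w where "E w v" "d u w = k"
proof -
  obtain xs where xs: "walk V E xs" "hd xs = u" "last xs = v" "length xs = Suc (Suc k)"
    using shortest_walk[OF u v] uv by auto
  have "length (butlast xs) = Suc k"
    using xs by simp
  then have "butlast xs \<noteq> []"
    by (metis Zero_not_Suc list.size(3))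
  then have ys: "walk V E (butlast xs)" "hd (butlast xs) = u" "last (butlast xs) = xs ! k"
    using walk_butlast xs by (auto simp: hd_conv_nth last_conv_nth nth_butlast walk_def)
  have "v = xs ! Suc k"
    using xs by (metis diff_Suc_1 last_conv_nth list.size(3) nat.distinct(1))
  then have e: "E (xs ! k) v"
    using xs unfolding walk_def by simp
  have "d u (xs ! k) \<le> k"
    using gdist_le_walk[OF ys] xs by simp
  moreover have "Suc k \<le> d u (xs ! k) + 1"
    using gdist_edge_le[OF u e] uv by simp
  ultimately show thesis
    using that e by simp
qed

lemma gdist_edge: "E u v \<Longrightarrow> d u v = 1"
proof -
  assume e: "E u v"
  have "walk V E [u, v]" using e edge_in_V unfolding walk_def by auto
  then have "d u v \<le> 1" using gdist_le_walk[of "[u, v]" u v] by simp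
  moreover have "d u v \<noteq> 0" using gdist_eq_0_iff edge_in_V[OF e] edge_irrefl[OF e] by blast
  ultimately show ?thesis by simp
qed

lemma gdist_eq_1_iff:
  assumes u: "u \<in> V" and v: "v \<in> V"
  shows "d u v = 1 \<longleftrightarrow> E u v"
proof
  assume "d u v = 1"
  then obtain w where "E w v" "d u w = 0"
    using gdist_predecessor[OF u v] by auto
  then show "E u v"
    using gdist_eq_0_iff[OF u] edge_in_V by blast
qed (rule gdist_edge)

lemma gdist_leaf:
  assumes l: "l \<in> leaves V E" and u: "u \<in> V" "u \<noteq> l"
  shows "d u l = d u (support_of l) + 1"
proof -
  have lV: "l \<in> V" using l leaves_subset_V by blast
  obtain k where k: "d u l = Suc k"
    using gdist_eq_0_iff[OF u(1) lV] u(2) not0_implies_Suc by blast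
  then obtain w where "E w l" "d u w = k"
    using gdist_predecessor[OF u(1) lV] by blast
  then show ?thesis
    using k leaf_edge_support_of[OF l] edge_sym by auto
qed

lemma neighbour_closed_eq_V:
  assumes "A \<subseteq> V" "a \<in> A" and closed: "\<And>x y. x \<in> A \<Longrightarrow> E x y \<Longrightarrow> y \<in> A"
  shows "A = V"
proof -
  have aV: "a \<in> V" using assms by blast
  have "v \<in> A" if "v \<in> V" "d a v = k" for v k
    using that
  proof (induction k arbitrary: v)
    case 0
    then show ?case using gdist_eq_0_iff[OF aV] \<open>a \<in> A\<close> by auto
  next
    case (Suc k)
    then obtain w where "E w v" "d a w = k"
      using gdist_predecessor[OF aV] by blast
    then show ?case using Suc.IH closed edge_in_V by blast
  qed
  then show ?thesis using \<open>A \<subseteq> V\<close> by blast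
qed

lemma support_not_leaf:
  assumes "\<not> iso_P2 V E" "s \<in> support_vertices V E"
  shows "s \<notin> leaves V E"
proof
  assume s: "s \<in> leaves V E"
  obtain l where l: "l \<in> leaves V E" "E s l"
    using assms(2) unfolding support_vertices_def by blast
  have "{s, l} = V"
  proof (rule neighbour_closed_eq_V)
    show "{s, l} \<subseteq> V" using edge_in_V[OF l(2)] by blast
    show "\<And>x y. x \<in> {s, l} \<Longrightarrow> E x y \<Longrightarrow> y \<in> {s, l}"
      using leaf_neighbour_unique[OF s] leaf_neighbour_unique[OF l(1)] l(2) edge_sym by blast
  qed (rule insertI1)
  then show False
    using assms(1) l(2) edge_irrefl unfolding iso_P2_def by blast
qed

lemma resolving_setI:
  assumes "S \<subseteq> V" and "\<And>x y. x \<in> V - S \<Longrightarrow> y \<in> V - S \<Longrightarrow> x \<noteq> y \<Longrightarrow> \<exists>u\<in>S. d u x \<noteq> d u y"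
  shows "resolving_set V E S"
  unfolding resolving_set_def
proof (intro conjI ballI impI)
  fix x y assume xy: "x \<in> V" "y \<in> V" "x \<noteq> y"
  show "\<exists>u\<in>S. d u x \<noteq> d u y"
  proof (cases "x \<in> S \<or> y \<in> S")
    case True
    then show ?thesis
      using xy gdist_refl gdist_eq_0_iff gdist_sym by metis
  qed (use assms xy in blast)
qed (rule assms(1))

lemma mld_set_V: "mld_set V E V"
  unfolding mld_set_def dominating_set_def by (auto intro: resolving_setI)

lemma domination_number_min:
  "\<exists>D. dominating_set V E D \<and> card D = domination_number V E"
  "dominating_set V E D \<Longrightarrow> domination_number V E \<le> card D"
  unfolding domination_number_def
  using Min_card_attained[OF finite_V _ dominating_set_subset] mld_set_V
  unfolding mld_set_def by blast+

lemma mld_number_min: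
  "\<exists>W. mld_set V E W \<and> card W = mld_number V E"
  "mld_set V E W \<Longrightarrow> mld_number V E \<le> card W"
proof -
  have "\<And>W. mld_set V E W \<Longrightarrow> W \<subseteq> V"
    unfolding mld_set_def using dominating_set_subset by blast
  then show "\<exists>W. mld_set V E W \<and> card W = mld_number V E"
    "mld_set V E W \<Longrightarrow> mld_number V E \<le> card W"
    unfolding mld_number_def using Min_card_attained[where P = "mld_set V E", OF finite_V mld_set_V] by blast+
qed

lemma resolving_set_inj_on_support_of:
  assumes "resolving_set V E W"
  shows "inj_on support_of (leaves V E - W)"
proof (rule inj_onI, rule ccontr)
  fix l l' assume l: "l \<in> leaves V E - W" and l': "l' \<in> leaves V E - W"
    and same: "support_of l = support_of l'" and "l \<noteq> l'"
  then obtain u where u: "u \<in> W" "d u l \<noteq> d u l'"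
    using assms leaves_subset_V unfolding resolving_set_def by blast
  have "u \<in> V" "u \<noteq> l" "u \<noteq> l'"
    using assms u(1) l l' unfolding resolving_set_def by auto
  then show False
    using u(2) same gdist_leaf l l' by simp
qed

lemma dominating_set_injection:
  assumes np: "\<not> iso_P2 V E" and D: "dominating_set V E D"
  obtains g where "inj_on g (support_vertices V E)" "g ` support_vertices V E \<subseteq> D"
    "g ` support_vertices V E \<subseteq> support_vertices V E \<union> leaves V E"
proof
  let ?S = "support_vertices V E"
  let ?g = "\<lambda>s. if s \<in> D then s else chosen_leaf s"
  have "inj_on chosen_leaf (?S - D)"
    using inj_on_chosen_leaf by (rule inj_on_subset) blast
  then show "inj_on ?g ?S"
    using support_not_leaf[OF np] chosen_leaf by (intro inj_on_if_replace) auto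
  show "?g ` ?S \<subseteq> ?S \<union> leaves V E"
    using chosen_leaf by auto
  show "?g ` ?S \<subseteq> D"
    using dominating_set_leaf[OF D] chosen_leaf support_of_chosen_leaf by fastforce
qed

lemma mld_set_injection:
  assumes np: "\<not> iso_P2 V E" and W: "mld_set V E W"
  obtains h where "inj_on h (leaves V E)" "h ` leaves V E \<subseteq> W"
    "h ` leaves V E \<subseteq> support_vertices V E \<union> leaves V E"
proof
  let ?L = "leaves V E"
  let ?h = "\<lambda>l. if l \<in> W then l else support_of l"
  show "inj_on ?h ?L"
    using W resolving_set_inj_on_support_of support_not_leaf[OF np] support_of(2)
    unfolding mld_set_def by (intro inj_on_if_replace) auto
  show "?h ` ?L \<subseteq> support_vertices V E \<union> ?L"
    using support_of(2) by auto
  show "?h ` ?L \<subseteq> W"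
    using W dominating_set_leaf unfolding mld_set_def by auto
qed

lemma leaf_within_two_if_dominated:
  assumes D: "dominating_set V E D" "D \<subseteq> support_vertices V E \<union> leaves V E" and u: "u \<in> V"
  shows "\<exists>l\<in>leaves V E. d u l \<le> 2"
proof -
  obtain x where x: "x \<in> support_vertices V E \<union> leaves V E" "d u x \<le> 1"
  proof (cases "u \<in> D")
    case True
    then show thesis
      using that[of u] D(2) gdist_refl[OF u] by auto
  next
    case False
    then obtain w where "w \<in> D" "E u w"
      using D(1) u unfolding dominating_set_def by blast
    then show thesis
      using that[of w] D(2) gdist_edge by auto
  qed
  from x(1) show ?thesis
  proof
    assume "x \<in> support_vertices V E"
    then obtain l where l: "l \<in> leaves V E" "E x l"
      unfolding support_vertices_def by blast
    have "d u l \<le> 2"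
      using gdist_edge_le[OF u l(2)] x(2) by simp
    then show ?thesis
      using l(1) by blast
  next
    assume "x \<in> leaves V E"
    moreover have "d u x \<le> 2"
      using x(2) by simp
    ultimately show ?thesis
      by blast
  qed
qed

lemma support_vertices_dominating:
  assumes iii: "\<forall>u\<in>V. \<exists>l\<in>leaves V E. d u l \<le> 2"
  shows "dominating_set V E (support_vertices V E)"
  unfolding dominating_set_def
proof (intro conjI ballI)
  fix x assume "x \<in> V - support_vertices V E"
  then have x: "x \<in> V" "x \<notin> support_vertices V E" by auto
  show "\<exists>a\<in>support_vertices V E. E x a"
  proof (cases "x \<in> leaves V E")
    case True
    then show ?thesis using support_of by blast
  next
    case False
    obtain l where l: "l \<in> leaves V E" "d x l \<le> 2"
      using iii x(1) by blast
    have lV: "l \<in> V" using l(1) leaves_subset_V by blast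
    have "d x l \<noteq> 0"
      using gdist_eq_0_iff[OF x(1) lV] False l(1) by blast
    moreover have "d x l \<noteq> 1"
      using gdist_eq_1_iff[OF x(1) lV] x l(1) lV unfolding support_vertices_def by blast
    ultimately have "d x l = Suc 1"
      using l(2) by linarith
    then obtain w where w: "E w l" "d x w = 1"
      using gdist_predecessor[OF x(1) lV] by blast
    then have "w \<in> support_vertices V E"
      unfolding support_vertices_def using edge_in_V l(1) by blast
    moreover have "E x w"
      using gdist_eq_1_iff[OF x(1)] w edge_in_V by blast
    ultimately show ?thesis by blast
  qed
qed (rule support_vertices_subset_V)

lemma domination_number_eq_card_support_vertices_iff:
  assumes np: "\<not> iso_P2 V E"
  shows "domination_number V E = card (support_vertices V E) \<longleftrightarrow>
    (\<forall>u\<in>V. \<exists>l\<in>leaves V E. d u l \<le> 2)"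
proof -
  let ?S = "support_vertices V E" and ?L = "leaves V E"
  obtain D where D: "dominating_set V E D" "card D = domination_number V E"
    using domination_number_min(1) by blast
  obtain g where g: "inj_on g ?S" "g ` ?S \<subseteq> D" "g ` ?S \<subseteq> ?S \<union> ?L"
    using dominating_set_injection[OF np D(1)] .
  have fin: "finite D"
    using D(1) dominating_set_subset finite_V finite_subset by blast
  note bounds = injection_card_le_and_subset[OF fin g]
  show ?thesis
  proof
    assume "domination_number V E = card ?S"
    then show "\<forall>u\<in>V. \<exists>l\<in>?L. d u l \<le> 2"
      using leaf_within_two_if_dominated[OF D(1)] bounds(2) D(2) by simp
  next
    assume "\<forall>u\<in>V. \<exists>l\<in>?L. d u l \<le> 2"
    then have "domination_number V E \<le> card ?S"
      using domination_number_min(2) support_vertices_dominating by blast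
    then show "domination_number V E = card ?S"
      using bounds(1) D(2) by simp
  qed
qed

text \<open>A neighbour of v one step closer to m; arbitrary for v = m.\<close>

definition parent :: "'a \<Rightarrow> 'a \<Rightarrow> 'a" where
  "parent m v = (SOME p. E p v \<and> d m p + 1 = d m v)"

lemma parent:
  assumes m: "m \<in> V" and v: "v \<in> V" "v \<noteq> m"
  shows "E (parent m v) v" and "d m (parent m v) + 1 = d m v"
proof -
  obtain k where "d m v = Suc k"
    using gdist_eq_0_iff[OF m v(1)] v(2) not0_implies_Suc by blast
  then have "\<exists>p. E p v \<and> d m p + 1 = d m v"
    using gdist_predecessor[OF m v(1)] by (metis Suc_eq_plus1)
  then have "E (parent m v) v \<and> d m (parent m v) + 1 = d m v"
    unfolding parent_def by (rule someI_ex)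
  then show "E (parent m v) v" "d m (parent m v) + 1 = d m v" by auto
qed

lemma ancestor:
  assumes m: "m \<in> V" and a: "a \<in> V"
  shows "i \<le> d m a \<Longrightarrow> (parent m ^^ i) a \<in> V \<and> d m ((parent m ^^ i) a) = d m a - i"
proof (induction i)
  case (Suc i)
  let ?w = "(parent m ^^ i) a"
  have w: "?w \<in> V" "d m ?w = d m a - i" "?w \<noteq> m"
    using Suc gdist_refl[OF m] by auto
  then show ?case
    using parent[OF m w(1,3)] edge_in_V by auto
qed (simp add: a)

lemma ancestor_edge:
  assumes "m \<in> V" "a \<in> V" "i < d m a"
  shows "E ((parent m ^^ Suc i) a) ((parent m ^^ i) a)"
proof -
  let ?w = "(parent m ^^ i) a"
  have "?w \<in> V" "d m ?w \<noteq> 0"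
    using ancestor[OF assms(1,2), of i] assms(3) by auto
  moreover have "?w \<noteq> m"
    using \<open>d m ?w \<noteq> 0\<close> gdist_refl[OF assms(1)] by auto
  ultimately show ?thesis
    using parent(1)[OF assms(1)] by simp
qed

lemma ancestor_root: "m \<in> V \<Longrightarrow> a \<in> V \<Longrightarrow> (parent m ^^ d m a) a = m"
  using ancestor[of m a "d m a"] gdist_eq_0_iff[of m "(parent m ^^ d m a) a"] by simp

definition ancestors :: "'a \<Rightarrow> 'a \<Rightarrow> nat \<Rightarrow> 'a list" where
  "ancestors m a k = map (\<lambda>i. (parent m ^^ i) a) [0..<Suc k]"

lemma ancestor_index_eq:
  assumes "m \<in> V" "a \<in> V" "b \<in> V" "d m a = d m b" "i \<le> d m a" "j \<le> d m a"
    and "(parent m ^^ i) a = (parent m ^^ j) b"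
  shows "i = j"
  using ancestor[OF assms(1,2), of i] ancestor[OF assms(1,3), of j] assms(4-7) by auto

lemma ancestors:
  assumes m: "m \<in> V" and a: "a \<in> V" and k: "k \<le> d m a"
  shows "walk V E (ancestors m a k)" and "distinct (ancestors m a k)"
    and "hd (ancestors m a k) = a" and "last (ancestors m a k) = (parent m ^^ k) a"
    and "\<forall>w\<in>set (ancestors m a k). d m w \<le> d m a"
proof -
  show "walk V E (ancestors m a k)"
    unfolding ancestors_def using ancestor[OF m a] ancestor_edge[OF m a] edge_sym k
    by (intro walk_map_upt) auto
  have "inj_on (\<lambda>i. (parent m ^^ i) a) {0..<Suc k}"
    using ancestor_index_eq[OF m a a refl] k by (intro inj_onI) auto
  then show "distinct (ancestors m a k)"
    unfolding ancestors_def by (simp add: distinct_map del: upt_Suc)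
  show "hd (ancestors m a k) = a" "last (ancestors m a k) = (parent m ^^ k) a"
    unfolding ancestors_def by (simp_all add: hd_map last_map del: upt_Suc)
  show "\<forall>w\<in>set (ancestors m a k). d m w \<le> d m a"
    unfolding ancestors_def using ancestor[OF m a] k by (auto simp del: upt_Suc)
qed

end

locale tree = connected_sgraph +
  assumes acyclic: "\<nexists>xs. is_cycle V E xs"
begin

text \<open>Walking up from two distinct vertices on the same level until the ancestor chains meet
  gives a path between them through lower levels only.\<close>

lemma level_path:
  assumes m: "m \<in> V" and a: "a \<in> V" and b: "b \<in> V" and ab: "a \<noteq> b"
    and da: "d m a = L" and db: "d m b = L"
  obtains P where "walk V E P" "distinct P" "hd P = a" "last P = b" "3 \<le> length P"
    "\<forall>w\<in>set P. d m w \<le> L"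
proof -
  define J where "J = (LEAST i. (parent m ^^ i) a = (parent m ^^ i) b)"
  have "(parent m ^^ L) a = (parent m ^^ L) b"
    using ancestor_root[OF m a] ancestor_root[OF m b] da db by simp
  then have JL: "J \<le> L" and meet: "(parent m ^^ J) a = (parent m ^^ J) b"
    and before: "\<And>i. i < J \<Longrightarrow> (parent m ^^ i) a \<noteq> (parent m ^^ i) b"
    unfolding J_def by (auto intro: Least_le LeastI dest: not_less_Least)
  have J0: "0 < J"
    using meet ab by (cases J) auto
  define up where "up = ancestors m a J"
  define down where "down = rev (ancestors m b (J - 1))"
  have "E (last up) (hd down)"
    using ancestor_edge[OF m b, of "J - 1"] ancestors(4)[OF m b, of "J - 1"] J0 JL db meet
    unfolding up_def down_def by (simp add: ancestors_def hd_rev)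
  then have walk: "walk V E (up @ down)"
    using ancestors(1)[OF m a] ancestors(1)[OF m b] JL da db
    unfolding up_def down_def by (intro walk_append walk_rev) auto
  have distinct: "distinct (up @ down)"
  proof -
    have "(parent m ^^ i) a \<noteq> (parent m ^^ j) b" if "i \<le> J" "j < J" for i j
    proof
      assume eq: "(parent m ^^ i) a = (parent m ^^ j) b"
      then have "i = j"
        using ancestor_index_eq[OF m a b _ _ _ eq] that JL da db by simp
      then show False
        using before[of j] eq that by simp
    qed
    then have "set up \<inter> set down = {}"
      unfolding up_def down_def ancestors_def using J0 by (auto simp del: upt_Suc)
    then show ?thesis
      using ancestors(2)[OF m a] ancestors(2)[OF m b] JL da db
      unfolding up_def down_def by simp
  qed
  have "length up = Suc J" "length down = J"
    unfolding up_def down_def ancestors_def using J0 by simp_all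
  moreover have "hd up = a" "last down = b"
    using ancestors(3)[OF m a] ancestors(3)[OF m b] JL da db
    unfolding up_def down_def by (simp_all add: last_rev)
  ultimately have ends: "hd (up @ down) = a" "last (up @ down) = b" "3 \<le> length (up @ down)"
    using J0 by (auto simp flip: length_greater_0_conv)
  have levels: "\<forall>w\<in>set (up @ down). d m w \<le> L"
    using ancestors(5)[OF m a, of J] ancestors(5)[OF m b, of "J - 1"] JL da db
    unfolding up_def down_def by auto
  show thesis
    by (rule that[OF walk distinct ends levels])
qed

lemma gdist_neq_if_edge: "m \<in> V \<Longrightarrow> E a b \<Longrightarrow> d m a \<noteq> d m b"
proof
  assume m: "m \<in> V" and e: "E a b" and eq: "d m a = d m b"
  have aV: "a \<in> V" and bV: "b \<in> V"
    using edge_in_V[OF e] by auto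
  obtain P where "walk V E P" "distinct P" "hd P = a" "last P = b" "3 \<le> length P"
    by (rule level_path[OF m aV bV edge_irrefl[OF e] refl eq[symmetric]])
  then have "is_cycle V E P"
    unfolding is_cycle_def using edge_sym[OF e] by simp
  then show False
    using acyclic by blast
qed

lemma closer_neighbour_unique:
  assumes m: "m \<in> V" and ex: "E x s" and ey: "E y s"
    and dx: "d m x + 1 = d m s" and dy: "d m y + 1 = d m s"
  shows "x = y"
proof (rule ccontr)
  assume xy: "x \<noteq> y"
  have xV: "x \<in> V" and yV: "y \<in> V" and level: "d m y = d m x"
    using edge_in_V[OF ex] edge_in_V[OF ey] dx dy by auto
  obtain P where P: "walk V E P" "distinct P" "hd P = x" "last P = y" "3 \<le> length P"
    "\<forall>w\<in>set P. d m w \<le> d m x"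
    by (rule level_path[OF m xV yV xy refl level])
  have "P \<noteq> []"
    using P(5) by auto
  have "s \<notin> set P"
    using P(6) dx by fastforce
  moreover have "walk V E (s # P)"
    using \<open>P \<noteq> []\<close> P(1,3) edge_in_V[OF ex] edge_sym[OF ex] by (simp add: walk_Cons)
  ultimately have "is_cycle V E (s # P)"
    unfolding is_cycle_def using P(2,4,5) ey \<open>P \<noteq> []\<close> by simp
  then show False
    using acyclic by blast
qed

lemma leaf_if_neighbours_closer:
  assumes m: "m \<in> V" and w: "w \<in> V" "w \<noteq> m"
    and closer: "\<And>z. E w z \<Longrightarrow> d m z + 1 = d m w"
  shows "w \<in> leaves V E"
proof (rule leafI[OF w(1)])
  show "E w (parent m w)"
    using parent(1)[OF m w] edge_sym by blast
  show "u = parent m w" if "E w u" for u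
    using closer_neighbour_unique[OF m edge_sym[OF that] parent(1)[OF m w]] closer[OF that]
      parent(2)[OF m w] by simp
qed

text \<open>A vertex w closer to x than to s and as far from s as possible has all its neighbours
  closer to s, so it is a leaf, and its support vertex is the witness.\<close>

lemma support_closer_than_neighbour:
  assumes x: "x \<in> V" "x \<notin> leaves V E" and e: "E s x"
  obtains t where "t \<in> support_vertices V E" "d x t < d s t"
proof -
  have s: "s \<in> V" using edge_in_V[OF e] by blast
  define C where "C = {w\<in>V. d x w < d s w}"
  have "finite C" "x \<in> C"
    unfolding C_def using finite_V x gdist_refl gdist_edge[OF e] by simp_all
  then obtain w where wC: "w \<in> C" and w_max: "\<And>z. z \<in> C \<Longrightarrow> d s z \<le> d s w"
    using obtain_maximizer[where f = "d s"] by blast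
  have wV: "w \<in> V" and dxw: "d x w < d s w"
    using wC unfolding C_def by auto
  have closer: "d s z + 1 = d s w" if ez: "E w z" for z
  proof -
    have "d s z \<noteq> d s w + 1"
    proof
      assume "d s z = d s w + 1"
      moreover have "d x z \<le> d x w + 1"
        using gdist_edge_le[OF x(1) ez] .
      ultimately have "z \<in> C"
        unfolding C_def using edge_in_V[OF ez] dxw by simp
      then show False
        using w_max \<open>d s z = d s w + 1\<close> by fastforce
    qed
    then show ?thesis
      using gdist_edge_le[OF s ez] gdist_edge_le[OF s edge_sym[OF ez]] gdist_neq_if_edge[OF s ez]
      by linarith
  qed
  have "w \<noteq> s"
    using dxw gdist_refl[OF s] by auto
  then have leaf: "w \<in> leaves V E"
    using leaf_if_neighbours_closer[OF s wV] closer by blast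
  then have "w \<noteq> x"
    using x(2) by blast
  define t where "t = parent x w"
  have t: "E t w" "d x t + 1 = d x w"
    using parent[OF x(1) wV \<open>w \<noteq> x\<close>] t_def by auto
  have "t \<in> support_vertices V E"
    unfolding support_vertices_def using edge_in_V[OF t(1)] leaf t(1) by blast
  moreover have "d x t < d s t"
    using t dxw closer[OF edge_sym[OF t(1)]] by linarith
  ultimately show thesis
    by (rule that)
qed

text \<open>As x is closer to t than a is, x is the only neighbour of a closer to t, so y is not.\<close>

lemma siblings_resolved_by_support:
  assumes ex: "E a x" and ey: "E a y" and xy: "x \<noteq> y" and x: "x \<notin> leaves V E"
  shows "\<exists>t\<in>support_vertices V E. d t x \<noteq> d t y"
proof -
  have xV: "x \<in> V" and aV: "a \<in> V"
    using edge_in_V[OF ex] by auto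
  obtain t where t: "t \<in> support_vertices V E" "d x t < d a t"
    using support_closer_than_neighbour[OF xV x ex] by blast
  have tV: "t \<in> V"
    using t(1) support_vertices_subset_V by blast
  have closer: "d t x + 1 = d t a"
    using t(2) gdist_sym[OF tV xV] gdist_sym[OF tV aV] gdist_edge_le[OF tV edge_sym[OF ex]]
    by linarith
  have "d t x \<noteq> d t y"
  proof
    assume "d t x = d t y"
    then show False
      using closer_neighbour_unique[OF tV edge_sym[OF ex] edge_sym[OF ey] closer] closer xy by simp
  qed
  then show ?thesis
    using t(1) by blast
qed

lemma resolving_set_mld_candidate:
  assumes domS: "dominating_set V E (support_vertices V E)"
  shows "resolving_set V E mld_candidate"
proof (rule resolving_setI)
  let ?S = "support_vertices V E" and ?L = "leaves V E"
  have S: "?S \<subseteq> mld_candidate"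
    unfolding mld_candidate_def by blast
  show "mld_candidate \<subseteq> V"
    unfolding mld_candidate_def using support_vertices_subset_V leaves_subset_V by blast
  fix x y assume x: "x \<in> V - mld_candidate" and y: "y \<in> V - mld_candidate" and xy: "x \<noteq> y"
  obtain a where a: "a \<in> ?S" "E a x"
    using domS x S edge_sym unfolding dominating_set_def by blast
  show "\<exists>u\<in>mld_candidate. d u x \<noteq> d u y"
  proof (cases "E a y")
    case False
    then have "d a y \<noteq> 1"
      using gdist_eq_1_iff edge_in_V[OF a(2)] y by blast
    then show ?thesis
      using gdist_edge[OF a(2)] a(1) S by (metis subsetD)
  next
    case ay: True
    consider "x \<notin> ?L" | "y \<notin> ?L" | "x \<in> ?L" "y \<in> ?L" by blast
    then show ?thesis
    proof cases
      case 1
      then show ?thesis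
        using siblings_resolved_by_support[OF a(2) ay xy] S by blast
    next
      case 2
      then show ?thesis
        using siblings_resolved_by_support[OF ay a(2) xy[symmetric]] S by (metis subsetD)
    next
      case 3
      then have "x = chosen_leaf (support_of x)" "y = chosen_leaf (support_of y)"
        using x y leaf_outside_mld_candidate by auto
      moreover have "support_of x = a" "support_of y = a"
        using 3 edge_sym[OF a(2)] edge_sym[OF ay] leaf_edge_support_of by auto
      ultimately show ?thesis
        using xy by simp
    qed
  qed
qed

lemma mld_candidate_mld_set:
  assumes "\<forall>u\<in>V. \<exists>l\<in>leaves V E. d u l \<le> 2"
  shows "mld_set V E mld_candidate"
proof -
  have domS: "dominating_set V E (support_vertices V E)"
    using support_vertices_dominating[OF assms] .
  moreover have "support_vertices V E \<subseteq> mld_candidate" "mld_candidate \<subseteq> V"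
    unfolding mld_candidate_def using support_vertices_subset_V leaves_subset_V by auto
  ultimately have "dominating_set V E mld_candidate"
    unfolding dominating_set_def by blast
  then show ?thesis
    using resolving_set_mld_candidate[OF domS] unfolding mld_set_def by blast
qed

lemma mld_number_eq_card_leaves_iff:
  assumes np: "\<not> iso_P2 V E"
  shows "mld_number V E = card (leaves V E) \<longleftrightarrow> (\<forall>u\<in>V. \<exists>l\<in>leaves V E. d u l \<le> 2)"
proof -
  let ?S = "support_vertices V E" and ?L = "leaves V E"
  obtain W where W: "mld_set V E W" "card W = mld_number V E"
    using mld_number_min(1) by blast
  obtain h where h: "inj_on h ?L" "h ` ?L \<subseteq> W" "h ` ?L \<subseteq> ?S \<union> ?L"
    using mld_set_injection[OF np W(1)] .
  have domW: "dominating_set V E W"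
    using W(1) unfolding mld_set_def by blast
  have fin: "finite W"
    using domW dominating_set_subset finite_V finite_subset by blast
  note bounds = injection_card_le_and_subset[OF fin h]
  show ?thesis
  proof
    assume "mld_number V E = card ?L"
    then show "\<forall>u\<in>V. \<exists>l\<in>?L. d u l \<le> 2"
      using leaf_within_two_if_dominated[OF domW] bounds(2) W(2) by simp
  next
    assume "\<forall>u\<in>V. \<exists>l\<in>?L. d u l \<le> 2"
    then have "mld_number V E \<le> card ?L"
      using mld_number_min(2)[OF mld_candidate_mld_set] card_mld_candidate le_trans by blast
    then show "mld_number V E = card ?L"
      using bounds(1) W(2) by simp
  qed
qed

end

theorem theorem4:
  fixes V :: "'a set" and E :: "'a \<Rightarrow> 'a \<Rightarrow> bool"
  assumes "is_tree V E" and "\<not> iso_P2 V E"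
  shows "(mld_number V E = card (leaves V E) \<longleftrightarrow> domination_number V E = card (support_vertices V E))
       \<and> (domination_number V E = card (support_vertices V E) \<longleftrightarrow>
            (\<forall>u\<in>V. \<exists>l\<in>leaves V E. gdist V E u l \<le> 2))"
proof -
  interpret tree V E
    using assms(1) unfolding is_tree_def by unfold_locales blast+
  show ?thesis
    using mld_number_eq_card_leaves_iff[OF assms(2)]
      domination_number_eq_card_support_vertices_iff[OF assms(2)] by blast
qed

end
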